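(* Let $n \ge 1$ and $M = 2^m$ with $m \ge 1$ an integer (so $m = \log_2 M$). Let $\{(x^{(t)}, r^{(t)}) \in \mathbb{R}^n \times \{1,-1\} : t = 1, \ldots, M\}$ be training samples, let $\sigma = \max_{r,s}\|x^{(r)} - x^{(s)}\| / \sqrt{2M}$, and let $f : \mathbb{R}^n \to \mathbb{R}^M$ be the feature map $$f(x) = \left(e^{-\|x - x^{(1)}\|^2/(2\sigma^2)}, \ldots, e^{-\|x - x^{(M)}\|^2/(2\sigma^2)}\right).$$ For $\vec{\theta} = (\theta_1, \ldots, \theta_m) \in \mathbb{R}^m$ define the weight vector $$w(\vec{\theta}) = \bigotimes_{j=1}^m \begin{pmatrix} \cos\theta_j \\ \sin\theta_j \end{pmatrix} \in \mathbb{R}^M,$$ and the loss $$L(\vec{\theta}) = \frac{1}{2M} \sum_{t=1}^M \Big(f(x^{(t)}) \cdot w(\vec{\theta}) - r^{(t)}\Big)^2.$$ When minimizing $L(\vec{\theta})$ over $\vec\theta\in\mathbb{R}^m$: if the gradient descent method is used, each iteration step can be carried out at (classical arithmetic) cost $O(nM^2)$; if Newton's method is used, each iteration step can be carried out at cost $O\big(M^2(n + \log^2 M)\big)$.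
   Context: Costs are counted as the number of classical arithmetic operations. Equivalently to the tensor-product definition, writing $t = t_1 + t_2 2 + \cdots + t_m 2^{m-1}$ in binary for $t \in \{0, 1, \ldots, M-1\}$, the $t$-th entry of $w(\vec{\theta})$ is $\prod_{j=1}^m \cos(\theta_j - t_j\pi/2)$. A gradient descent step computes $\nabla L(\vec\theta)$ and updates $\vec\theta$; a Newton step computes $\nabla L(\vec\theta)$, the $m\times m$ Hessian $\nabla^2 L(\vec\theta)$, and solves with (inverts) the Hessian. Potential degeneracies (zero gradient, singular Hessian) are not considered. *)

theory Defs
  imports "HOL-Analysis.Analysis"
begin

text \<open>A straight-line program is a list of instructions; instruction number k
  produces value number k. Operands refer to earlier values by index (an
  out-of-range index reads 0). The cost of a program is its length, i.e. the
  number of arithmetic operations (input reads and constants are counted too).\<close>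

datatype instr =
    Inp nat | Const real
  | Add nat nat | Sub nat nat | Mul nat nat | Div nat nat | Max2 nat nat
  | Exp nat | Sin nat | Cos nat | Sqrt nat

definition val :: "real list \<Rightarrow> nat \<Rightarrow> real" where
  "val vs a = (if a < length vs then vs ! a else 0)"

fun step :: "(nat \<Rightarrow> real) \<Rightarrow> real list \<Rightarrow> instr \<Rightarrow> real" where
  "step inp vs (Inp k) = inp k"
| "step inp vs (Const c) = c"
| "step inp vs (Add a b) = val vs a + val vs b"
| "step inp vs (Sub a b) = val vs a - val vs b"
| "step inp vs (Mul a b) = val vs a * val vs b"
| "step inp vs (Div a b) = val vs a / val vs b"
| "step inp vs (Max2 a b) = max (val vs a) (val vs b)"
| "step inp vs (Exp a) = exp (val vs a)"
| "step inp vs (Sin a) = sin (val vs a)"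
| "step inp vs (Cos a) = cos (val vs a)"
| "step inp vs (Sqrt a) = sqrt (val vs a)"

fun exec :: "(nat \<Rightarrow> real) \<Rightarrow> real list \<Rightarrow> instr list \<Rightarrow> real list" where
  "exec inp vs [] = vs"
| "exec inp vs (i # is) = exec inp (vs @ [step inp vs i]) is"

definition run :: "instr list \<Rightarrow> nat list \<Rightarrow> (nat \<Rightarrow> real) \<Rightarrow> real list" where
  "run P outs inp = map (val (exec inp [] P)) outs"

text \<open>Input encoding (M = 2^m samples, 0-based): x t i (t<M, i<n) at position t*n+i,
  label r t at M*n+t, theta j at M*n+M+j, step size eta at M*n+M+m.\<close>
definition enc :: "nat \<Rightarrow> nat \<Rightarrow> (nat \<Rightarrow> nat \<Rightarrow> real) \<Rightarrow> (nat \<Rightarrow> real)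
    \<Rightarrow> (nat \<Rightarrow> real) \<Rightarrow> real \<Rightarrow> nat \<Rightarrow> real" where
  "enc n m x r \<theta> \<eta> k =
     (let M = 2 ^ m in
      if k < M * n then x (k div n) (k mod n)
      else if k < M * n + M then r (k - M * n)
      else if k < M * n + M + m then \<theta> (k - M * n - M)
      else if k = M * n + M + m then \<eta> else 0)"

definition dist2 :: "nat \<Rightarrow> (nat \<Rightarrow> nat \<Rightarrow> real) \<Rightarrow> nat \<Rightarrow> nat \<Rightarrow> real" where
  "dist2 n x t s = (\<Sum>i<n. (x t i - x s i)^2)"

definition sigma :: "nat \<Rightarrow> nat \<Rightarrow> (nat \<Rightarrow> nat \<Rightarrow> real) \<Rightarrow> real" where
  "sigma n m x = Max {sqrt (dist2 n x a b) | a b. a < 2^m \<and> b < 2^m} / sqrt (2 * 2^m)"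

definition feat :: "nat \<Rightarrow> nat \<Rightarrow> (nat \<Rightarrow> nat \<Rightarrow> real) \<Rightarrow> nat \<Rightarrow> nat \<Rightarrow> real" where
  "feat n m x t s = exp (- dist2 n x t s / (2 * (sigma n m x)^2))"

text \<open>t-th entry of the tensor-product weight vector w(theta), t < 2^m.\<close>
definition wvec :: "nat \<Rightarrow> (nat \<Rightarrow> real) \<Rightarrow> nat \<Rightarrow> real" where
  "wvec m \<theta> t = (\<Prod>j<m. cos (\<theta> j - (if odd (t div 2^j) then pi/2 else 0)))"

definition loss :: "nat \<Rightarrow> nat \<Rightarrow> (nat \<Rightarrow> nat \<Rightarrow> real) \<Rightarrow> (nat \<Rightarrow> real) \<Rightarrow> (nat \<Rightarrow> real) \<Rightarrow> real" where
  "loss n m x r \<theta> = 1 / (2 * 2^m) *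
     (\<Sum>t<2^m. ((\<Sum>s<2^m. feat n m x t s * wvec m \<theta> s) - r t)^2)"

definition gradL :: "nat \<Rightarrow> nat \<Rightarrow> (nat \<Rightarrow> nat \<Rightarrow> real) \<Rightarrow> (nat \<Rightarrow> real) \<Rightarrow> (nat \<Rightarrow> real) \<Rightarrow> nat \<Rightarrow> real" where
  "gradL n m x r \<theta> j = deriv (\<lambda>u. loss n m x r (\<theta>(j := u))) (\<theta> j)"

definition hessL :: "nat \<Rightarrow> nat \<Rightarrow> (nat \<Rightarrow> nat \<Rightarrow> real) \<Rightarrow> (nat \<Rightarrow> real) \<Rightarrow> (nat \<Rightarrow> real) \<Rightarrow> nat \<Rightarrow> nat \<Rightarrow> real" where
  "hessL n m x r \<theta> j k = deriv (\<lambda>u. gradL n m x r (\<theta>(j := u)) k) (\<theta> j)"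

end

(*
  One step of either method is a straight-line program. The feature matrix F (M^2 entries,
  O(n) operations each) is computed once. The weights w_s(theta) and their partial derivatives are
  products of cosines, differentiation in theta_j shifting the j-th phase by pi/2; all first-order
  ones together cost O(m^2 M), all second-order ones O(m^3 M). The gradient is
  M^-1 sum_s z_s dw_s/dtheta_j with z = F^T (F w - r), at cost O(M^2 + m M); the Hessian also needs
  the vectors F dw/dtheta_j (O(m M^2)) and the products z . d^2 w/dtheta_j dtheta_k (O(m^2 M)).
  The Newton system is solved by Gaussian elimination in O(m^3) operations, the pivot being
  selected arithmetically because a straight-line program cannot branch. Since m^2 <= 2M, the
  totals are O(n M^2) and O(M^2 (n + m^2)).
*)
theory Submission
  imports Defs
begin

section \<open>Straight-line programs and their cost\<close>

type_synonym quantity = "(nat \<Rightarrow> real) \<Rightarrow> real"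

lemma exec_append: "exec inp vs (P @ Q) = exec inp (exec inp vs P) Q"
  by (induction P arbitrary: vs) auto

lemma exec_prefix: "\<exists>ws. exec inp vs P = vs @ ws"
  by (induction P arbitrary: vs) (auto, metis append_assoc)

lemma length_exec: "length (exec inp vs P) = length vs + length P"
  by (induction P arbitrary: vs) auto

definition computes :: "instr list \<Rightarrow> quantity \<Rightarrow> bool" where
  "computes P f \<longleftrightarrow> (\<exists>i<length P. \<forall>inp. exec inp [] P ! i = f inp)"

lemma computes_append:
  assumes "computes P f"
  shows "computes (P @ Q) f"
proof -
  obtain i where i: "i < length P" "\<forall>inp. exec inp [] P ! i = f inp"
    using assms unfolding computes_def by blast
  have "exec inp [] (P @ Q) ! i = exec inp [] P ! i" for inp
  proof -
    obtain ws where "exec inp [] (P @ Q) = exec inp [] P @ ws"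
      unfolding exec_append using exec_prefix by blast
    then show ?thesis using i(1) by (simp add: nth_append length_exec)
  qed
  then show ?thesis unfolding computes_def using i by (intro exI[of _ i]) auto
qed

definition extends :: "nat \<Rightarrow> quantity set \<Rightarrow> quantity set \<Rightarrow> bool" where
  "extends k S T \<longleftrightarrow>
     (\<forall>P. (\<forall>f\<in>S. computes P f) \<longrightarrow> (\<exists>Q. length Q \<le> k \<and> (\<forall>f\<in>T. computes (P @ Q) f)))"

lemma extends_trans [trans]:
  assumes "extends k1 A B" "extends k2 B C"
  shows "extends (k1 + k2) A C"
  unfolding extends_def
proof (intro allI impI)
  fix P assume "\<forall>f\<in>A. computes P f"
  then obtain Q1 where Q1: "length Q1 \<le> k1" "\<forall>f\<in>B. computes (P @ Q1) f"
    using assms(1) unfolding extends_def by blast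
  then obtain Q2 where Q2: "length Q2 \<le> k2" "\<forall>f\<in>C. computes (P @ Q1 @ Q2) f"
    using assms(2) unfolding extends_def by (metis append_assoc)
  show "\<exists>Q. length Q \<le> k1 + k2 \<and> (\<forall>f\<in>C. computes (P @ Q) f)"
    using Q1(1) Q2 by (intro exI[of _ "Q1 @ Q2"]) auto
qed

lemma extends_mono:
  assumes "extends k S T" "S \<subseteq> S'" "T' \<subseteq> T" "k \<le> k'"
  shows "extends k' S' T'"
  using assms unfolding extends_def by (meson order.trans subsetD)

lemma extends_keep:
  assumes "extends k S T" "S \<subseteq> U"
  shows "extends k U (U \<union> T)"
  unfolding extends_def
proof (intro allI impI)
  fix P assume P: "\<forall>f\<in>U. computes P f"
  then obtain Q where "length Q \<le> k" "\<forall>f\<in>T. computes (P @ Q) f"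
    using assms unfolding extends_def by blast
  then show "\<exists>Q. length Q \<le> k \<and> (\<forall>f\<in>U \<union> T. computes (P @ Q) f)"
    using P computes_append by blast
qed

lemma extends_subset: "T \<subseteq> S \<Longrightarrow> extends k S T"
  unfolding extends_def using computes_append by (metis append.right_neutral le0 length_0_conv subsetD)

lemma extends_union:
  assumes "extends k1 S T1" "extends k2 S T2"
  shows "extends (k1 + k2) S (T1 \<union> T2)"
proof -
  have "extends (k1 + k2) S (S \<union> T1 \<union> T2)"
  proof (rule extends_trans)
    show "extends k1 S (S \<union> T1)" using extends_keep[OF assms(1)] by simp
    show "extends k2 (S \<union> T1) (S \<union> T1 \<union> T2)" by (rule extends_keep[OF assms(2)]) auto
  qed
  then show ?thesis by (rule extends_mono) auto
qed

lemma extends_image: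
  assumes "finite A" "\<And>a. a \<in> A \<Longrightarrow> extends k S {F a}"
  shows "extends (card A * k) S (F ` A)"
  using assms
proof (induction A rule: finite_induct)
  case empty
  then show ?case by (simp add: extends_subset)
next
  case (insert a A)
  then have "extends (k + card A * k) S ({F a} \<union> F ` A)"
    by (intro extends_union) auto
  then show ?case using insert by simp
qed

lemma extends_instr:
  assumes "\<And>P. \<forall>f\<in>S. computes P f \<Longrightarrow> \<exists>ins. \<forall>inp. step inp (exec inp [] P) ins = h inp"
  shows "extends 1 S {h}"
  unfolding extends_def
proof (intro allI impI)
  fix P assume "\<forall>f\<in>S. computes P f"
  then obtain ins where ins: "\<forall>inp. step inp (exec inp [] P) ins = h inp" using assms by blast
  have "computes (P @ [ins]) h"
    unfolding computes_def exec_append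
    by (intro exI[of _ "length P"]) (simp add: ins nth_append length_exec)
  then show "\<exists>Q. length Q \<le> 1 \<and> (\<forall>f\<in>{h}. computes (P @ Q) f)"
    by (intro exI[of _ "[ins]"]) auto
qed

lemma computes_val:
  "computes P f \<Longrightarrow> \<exists>i. \<forall>inp. val (exec inp [] P) i = f inp"
  unfolding computes_def val_def by (auto simp: length_exec)

lemma extends_unop:
  assumes "\<And>inp vs i. step inp vs (ins i) = op (val vs i)" "extends k S {f}"
  shows "extends (Suc k) S {\<lambda>inp. op (f inp)}"
proof -
  have "extends 1 {f} {\<lambda>inp. op (f inp)}"
  proof (rule extends_instr)
    fix P assume "\<forall>g\<in>{f}. computes P g"
    then obtain i where "\<forall>inp. val (exec inp [] P) i = f inp" using computes_val by blast
    then show "\<exists>ins. \<forall>inp. step inp (exec inp [] P) ins = op (f inp)"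
      using assms(1) by metis
  qed
  with assms(2) show ?thesis using extends_trans by fastforce
qed

lemma extends_binop:
  assumes "\<And>inp vs i j. step inp vs (ins i j) = op (val vs i) (val vs j)"
    and "extends k1 S {f}" "extends k2 S {g}"
  shows "extends (Suc (k1 + k2)) S {\<lambda>inp. op (f inp) (g inp)}"
proof -
  have "extends 1 {f, g} {\<lambda>inp. op (f inp) (g inp)}"
  proof (rule extends_instr)
    fix P assume "\<forall>h\<in>{f, g}. computes P h"
    then obtain i j where "\<forall>inp. val (exec inp [] P) i = f inp" "\<forall>inp. val (exec inp [] P) j = g inp"
      using computes_val by (metis insertCI)
    then show "\<exists>ins. \<forall>inp. step inp (exec inp [] P) ins = op (f inp) (g inp)"
      using assms(1) by metis
  qed
  moreover have "extends (k1 + k2) S {f, g}"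
    using extends_union[OF assms(2,3)] by (simp add: insert_commute)
  ultimately show ?thesis using extends_trans by fastforce
qed

lemma extends_program:
  assumes "extends k {} (F ` {..<m})"
  shows "\<exists>P outs. length P \<le> k \<and> length outs = m \<and> (\<forall>inp. run P outs inp = map (\<lambda>j. F j inp) [0..<m])"
proof -
  obtain P where P: "length P \<le> k" "\<And>j. j < m \<Longrightarrow> computes P (F j)"
    using assms unfolding extends_def by (metis append_Nil empty_iff image_eqI lessThan_iff)
  define out where "out j = (SOME i. \<forall>inp. val (exec inp [] P) i = F j inp)" for j
  have "\<forall>inp. val (exec inp [] P) (out j) = F j inp" if "j < m" for j
    unfolding out_def using computes_val[OF P(2)[OF that]] by (rule someI_ex)
  then have "run P (map out [0..<m]) inp = map (\<lambda>j. F j inp) [0..<m]" for inp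
    unfolding run_def by simp
  then show ?thesis using P(1) by (intro exI[of _ P] exI[of _ "map out [0..<m]"]) auto
qed

text \<open>Expressions are trees, so a subterm occurring twice is computed twice; values that are
  used repeatedly are computed once in an earlier stage and referred to by \<open>Var\<close>.\<close>
datatype expr =
    Var quantity | Input nat | Lit real
  | Plus expr expr | Minus expr expr | Times expr expr | Quot expr expr | Larger expr expr
  | Exponential expr | Cosine expr | SquareRoot expr

primrec eval :: "expr \<Rightarrow> quantity" where
  "eval (Var f) = f"
| "eval (Input k) = (\<lambda>inp. inp k)"
| "eval (Lit c) = (\<lambda>_. c)"
| "eval (Plus a b) = (\<lambda>inp. eval a inp + eval b inp)"
| "eval (Minus a b) = (\<lambda>inp. eval a inp - eval b inp)"
| "eval (Times a b) = (\<lambda>inp. eval a inp * eval b inp)"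
| "eval (Quot a b) = (\<lambda>inp. eval a inp / eval b inp)"
| "eval (Larger a b) = (\<lambda>inp. max (eval a inp) (eval b inp))"
| "eval (Exponential a) = (\<lambda>inp. exp (eval a inp))"
| "eval (Cosine a) = (\<lambda>inp. cos (eval a inp))"
| "eval (SquareRoot a) = (\<lambda>inp. sqrt (eval a inp))"

primrec ops :: "expr \<Rightarrow> nat" where
  "ops (Var f) = 0"
| "ops (Input k) = Suc 0"
| "ops (Lit c) = Suc 0"
| "ops (Plus a b) = Suc (ops a + ops b)"
| "ops (Minus a b) = Suc (ops a + ops b)"
| "ops (Times a b) = Suc (ops a + ops b)"
| "ops (Quot a b) = Suc (ops a + ops b)"
| "ops (Larger a b) = Suc (ops a + ops b)"
| "ops (Exponential a) = Suc (ops a)"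
| "ops (Cosine a) = Suc (ops a)"
| "ops (SquareRoot a) = Suc (ops a)"

primrec vars :: "expr \<Rightarrow> quantity set" where
  "vars (Var f) = {f}"
| "vars (Input k) = {}"
| "vars (Lit c) = {}"
| "vars (Plus a b) = vars a \<union> vars b"
| "vars (Minus a b) = vars a \<union> vars b"
| "vars (Times a b) = vars a \<union> vars b"
| "vars (Quot a b) = vars a \<union> vars b"
| "vars (Larger a b) = vars a \<union> vars b"
| "vars (Exponential a) = vars a"
| "vars (Cosine a) = vars a"
| "vars (SquareRoot a) = vars a"

lemma extends_eval: "vars e \<subseteq> S \<Longrightarrow> extends (ops e) S {eval e}"
proof (induction e)
  case (Var f)
  then show ?case by (simp add: extends_subset)
next
  case (Input k)
  have "extends 1 S {\<lambda>inp. inp k}" by (rule extends_instr) (auto intro: exI[of _ "Inp k"])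
  then show ?case by simp
next
  case (Lit c)
  have "extends 1 S {\<lambda>_. c}" by (rule extends_instr) (auto intro: exI[of _ "Const c"])
  then show ?case by simp
qed (auto intro: extends_binop[where ins = Add] extends_binop[where ins = Sub]
    extends_binop[where ins = Mul] extends_binop[where ins = Div] extends_binop[where ins = Max2]
    extends_unop[where ins = Exp] extends_unop[where ins = Cos] extends_unop[where ins = Sqrt])

primrec esum :: "nat \<Rightarrow> (nat \<Rightarrow> expr) \<Rightarrow> expr" where
  "esum 0 e = Lit 0"
| "esum (Suc N) e = Plus (esum N e) (e N)"

primrec eprod :: "nat \<Rightarrow> (nat \<Rightarrow> expr) \<Rightarrow> expr" where
  "eprod 0 e = Lit 1"
| "eprod (Suc N) e = Times (eprod N e) (e N)"

primrec emax :: "nat \<Rightarrow> (nat \<Rightarrow> expr) \<Rightarrow> expr" where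
  "emax 0 e = e 0"
| "emax (Suc N) e = Larger (emax N e) (e (Suc N))"

lemma eval_esum [simp]: "eval (esum N e) inp = (\<Sum>i<N. eval (e i) inp)"
  by (induction N) auto

lemma eval_eprod [simp]: "eval (eprod N e) inp = (\<Prod>i<N. eval (e i) inp)"
  by (induction N) auto

lemma eval_emax [simp]: "eval (emax N e) inp = Max ((\<lambda>i. eval (e i) inp) ` {..N})"
proof (induction N)
  case (Suc N)
  then show ?case by (simp add: atMost_Suc max.commute)
qed simp

lemma vars_esum [simp]: "vars (esum N e) = (\<Union>i<N. vars (e i))"
  by (induction N) (auto simp: lessThan_Suc)

lemma vars_eprod [simp]: "vars (eprod N e) = (\<Union>i<N. vars (e i))"
  by (induction N) (auto simp: lessThan_Suc)

lemma vars_emax [simp]: "vars (emax N e) = (\<Union>i\<le>N. vars (e i))"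
  by (induction N) (auto simp: atMost_Suc)

lemma ops_esum [simp]: "ops (esum N e) = Suc (\<Sum>i<N. Suc (ops (e i)))"
  by (induction N) auto

lemma ops_eprod [simp]: "ops (eprod N e) = Suc (\<Sum>i<N. Suc (ops (e i)))"
  by (induction N) auto

lemma ops_emax [simp]: "ops (emax N e) = ops (e 0) + (\<Sum>i<N. Suc (ops (e (Suc i))))"
  by (induction N) auto

lemma extends_keep_eval:
  assumes "V \<subseteq> U" "\<And>inp. eval e inp = f inp" "vars e \<subseteq> V" "ops e \<le> k"
  shows "extends k U (U \<union> {f})"
proof -
  have "extends (ops e) U (U \<union> {eval e})"
    using extends_keep[OF extends_eval[OF assms(3)] assms(1)] .
  moreover have "eval e = f" using assms(2) by blast
  ultimately show ?thesis using assms(4) by (auto elim: extends_mono)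
qed

lemma extends_keep_image:
  assumes "finite A" "card A \<le> N" "V \<subseteq> U"
    and "\<And>a inp. a \<in> A \<Longrightarrow> eval (e a) inp = F a inp"
    and "\<And>a. a \<in> A \<Longrightarrow> vars (e a) \<subseteq> V"
    and "\<And>a. a \<in> A \<Longrightarrow> ops (e a) \<le> k"
  shows "extends (N * k) U (U \<union> F ` A)"
proof -
  have "extends k V {F a}" if "a \<in> A" for a
  proof -
    have "eval (e a) = F a" using assms(4) that by blast
    then show ?thesis using extends_eval[OF assms(5)[OF that]] assms(6)[OF that]
      by (metis extends_mono order_refl)
  qed
  then have "extends (card A * k) V (F ` A)" by (rule extends_image[OF assms(1)])
  then show ?thesis
    by (rule extends_keep[OF extends_mono]) (use assms(2,3) in auto)
qed

section \<open>Derivatives of the loss\<close>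

definition phase :: "nat \<Rightarrow> nat \<Rightarrow> real" where
  "phase j t = (if odd (t div 2^j) then pi/2 else 0)"

definition weight_deriv :: "nat \<Rightarrow> (nat \<Rightarrow> real) \<Rightarrow> (nat \<Rightarrow> nat) \<Rightarrow> nat \<Rightarrow> real" where
  "weight_deriv m \<theta> E t = (\<Prod>j<m. cos (\<theta> j - phase j t + real (E j) * pi / 2))"

definition bump :: "(nat \<Rightarrow> nat) \<Rightarrow> nat \<Rightarrow> nat \<Rightarrow> nat" where
  "bump E j = E(j := Suc (E j))"

lemma wvec_eq_weight_deriv: "wvec m \<theta> t = weight_deriv m \<theta> (\<lambda>_. 0) t"
  unfolding wvec_def weight_deriv_def phase_def by simp

lemma weight_deriv_split:
  assumes "j < m"
  shows "weight_deriv m (\<theta>(j := u)) E t =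
    cos (u - phase j t + real (E j) * pi / 2) * (\<Prod>i\<in>{..<m} - {j}. cos (\<theta> i - phase i t + real (E i) * pi / 2))"
proof -
  have "(\<Prod>i\<in>{..<m} - {j}. cos ((\<theta>(j := u)) i - phase i t + real (E i) * pi / 2)) =
      (\<Prod>i\<in>{..<m} - {j}. cos (\<theta> i - phase i t + real (E i) * pi / 2))"
    by (rule prod.cong) auto
  then show ?thesis
    unfolding weight_deriv_def using assms by (subst prod.remove[of _ j]) auto
qed

text \<open>Each derivative shifts a phase by \<open>pi/2\<close>, since \<open>cos' u = cos (u + pi/2)\<close>.\<close>
lemma has_real_derivative_weight_deriv:
  assumes "j < m"
  shows "((\<lambda>u. weight_deriv m (\<theta>(j := u)) E t) has_real_derivative weight_deriv m (\<theta>(j := u)) (bump E j) t) (at u)"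
proof -
  define c where "c = (\<Prod>i\<in>{..<m} - {j}. cos (\<theta> i - phase i t + real (E i) * pi / 2))"
  have c_bump: "(\<Prod>i\<in>{..<m} - {j}. cos (\<theta> i - phase i t + real (bump E j i) * pi / 2)) = c"
    unfolding c_def bump_def by (rule prod.cong) auto
  have "((\<lambda>u. cos (u - phase j t + real (E j) * pi / 2) * c) has_real_derivative
      - sin (u - phase j t + real (E j) * pi / 2) * 1 * c) (at u)"
    by (auto intro!: derivative_eq_intros)
  moreover have "- sin (u - phase j t + real (E j) * pi / 2) = cos (u - phase j t + real (bump E j j) * pi / 2)"
    by (simp add: bump_def minus_sin_cos_eq algebra_simps add_divide_distrib)
  moreover have "(\<lambda>u. weight_deriv m (\<theta>(j := u)) E t) = (\<lambda>u. cos (u - phase j t + real (E j) * pi / 2) * c)"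
    using weight_deriv_split[OF assms] unfolding c_def by blast
  ultimately show ?thesis
    using weight_deriv_split[OF assms, of \<theta> u "bump E j" t] unfolding c_bump c_def[symmetric] by simp
qed

definition model_deriv :: "nat \<Rightarrow> nat \<Rightarrow> (nat \<Rightarrow> nat \<Rightarrow> real) \<Rightarrow> (nat \<Rightarrow> real) \<Rightarrow> (nat \<Rightarrow> nat) \<Rightarrow> nat \<Rightarrow> real" where
  "model_deriv n m x \<theta> E t = (\<Sum>s<2^m. feat n m x t s * weight_deriv m \<theta> E s)"

definition residual :: "nat \<Rightarrow> nat \<Rightarrow> (nat \<Rightarrow> nat \<Rightarrow> real) \<Rightarrow> (nat \<Rightarrow> real) \<Rightarrow> (nat \<Rightarrow> real) \<Rightarrow> nat \<Rightarrow> real" where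
  "residual n m x r \<theta> t = model_deriv n m x \<theta> (\<lambda>_. 0) t - r t"

definition gradient :: "nat \<Rightarrow> nat \<Rightarrow> (nat \<Rightarrow> nat \<Rightarrow> real) \<Rightarrow> (nat \<Rightarrow> real) \<Rightarrow> (nat \<Rightarrow> real) \<Rightarrow> nat \<Rightarrow> real" where
  "gradient n m x r \<theta> j =
     1 / 2^m * (\<Sum>t<2^m. residual n m x r \<theta> t * model_deriv n m x \<theta> (bump (\<lambda>_. 0) j) t)"

definition hessian :: "nat \<Rightarrow> nat \<Rightarrow> (nat \<Rightarrow> nat \<Rightarrow> real) \<Rightarrow> (nat \<Rightarrow> real) \<Rightarrow> (nat \<Rightarrow> real) \<Rightarrow> nat \<Rightarrow> nat \<Rightarrow> real" where
  "hessian n m x r \<theta> j k =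
     1 / 2^m * (\<Sum>t<2^m. model_deriv n m x \<theta> (bump (\<lambda>_. 0) j) t * model_deriv n m x \<theta> (bump (\<lambda>_. 0) k) t
                       + residual n m x r \<theta> t * model_deriv n m x \<theta> (bump (bump (\<lambda>_. 0) k) j) t)"

lemma loss_eq_residual: "loss n m x r \<theta> = 1 / (2 * 2^m) * (\<Sum>t<2^m. (residual n m x r \<theta> t)^2)"
  unfolding loss_def residual_def model_deriv_def wvec_eq_weight_deriv ..

lemma has_real_derivative_model_deriv:
  assumes "j < m"
  shows "((\<lambda>u. model_deriv n m x (\<theta>(j := u)) E t) has_real_derivative model_deriv n m x (\<theta>(j := u)) (bump E j) t) (at u)"
  unfolding model_deriv_def
  by (auto intro!: DERIV_sum DERIV_cmult has_real_derivative_weight_deriv assms)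

lemma has_real_derivative_residual:
  assumes "j < m"
  shows "((\<lambda>u. residual n m x r (\<theta>(j := u)) t) has_real_derivative model_deriv n m x (\<theta>(j := u)) (bump (\<lambda>_. 0) j) t) (at u)"
  unfolding residual_def
  using has_real_derivative_model_deriv[OF assms] by (auto intro!: derivative_eq_intros)

lemma has_real_derivative_loss:
  assumes "j < m"
  shows "((\<lambda>u. loss n m x r (\<theta>(j := u))) has_real_derivative gradient n m x r (\<theta>(j := u)) j) (at u)"
proof -
  have "((\<lambda>u. (residual n m x r (\<theta>(j := u)) t)^2) has_real_derivative
      2 * (residual n m x r (\<theta>(j := u)) t * model_deriv n m x (\<theta>(j := u)) (bump (\<lambda>_. 0) j) t)) (at u)" for t
    using DERIV_power[OF has_real_derivative_residual[OF assms, where t = t], where n = 2]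
    by (simp add: algebra_simps)
  then have "((\<lambda>u. 1 / (2 * 2^m) * (\<Sum>t<2^m. (residual n m x r (\<theta>(j := u)) t)^2)) has_real_derivative
      1 / (2 * 2^m) * (\<Sum>t<2^m. 2 * (residual n m x r (\<theta>(j := u)) t * model_deriv n m x (\<theta>(j := u)) (bump (\<lambda>_. 0) j) t))) (at u)"
    by (intro DERIV_cmult DERIV_sum)
  then show ?thesis
    unfolding loss_eq_residual gradient_def by (simp add: sum_distrib_left[symmetric])
qed

lemma gradL_eq_gradient: "j < m \<Longrightarrow> gradL n m x r \<theta> j = gradient n m x r \<theta> j"
  unfolding gradL_def using DERIV_imp_deriv[OF has_real_derivative_loss] by (metis fun_upd_triv)

lemma has_real_derivative_gradient:
  assumes "j < m"
  shows "((\<lambda>u. gradient n m x r (\<theta>(j := u)) k) has_real_derivative hessian n m x r (\<theta>(j := u)) j k) (at u)"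
  unfolding gradient_def hessian_def
proof (intro DERIV_cmult DERIV_sum)
  fix t
  show "((\<lambda>u. residual n m x r (\<theta>(j := u)) t * model_deriv n m x (\<theta>(j := u)) (bump (\<lambda>_. 0) k) t) has_real_derivative
      model_deriv n m x (\<theta>(j := u)) (bump (\<lambda>_. 0) j) t * model_deriv n m x (\<theta>(j := u)) (bump (\<lambda>_. 0) k) t
      + residual n m x r (\<theta>(j := u)) t * model_deriv n m x (\<theta>(j := u)) (bump (bump (\<lambda>_. 0) k) j) t) (at u)"
    using DERIV_mult[OF has_real_derivative_residual[OF assms, where t = t]
        has_real_derivative_model_deriv[OF assms, where t = t and E = "bump (\<lambda>_. 0) k"]]
    by (simp add: mult.commute)
qed

lemma hessL_eq_hessian:
  assumes "j < m" "k < m"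
  shows "hessL n m x r \<theta> j k = hessian n m x r \<theta> j k"
proof -
  have "(\<lambda>u. gradL n m x r (\<theta>(j := u)) k) = (\<lambda>u. gradient n m x r (\<theta>(j := u)) k)"
    using gradL_eq_gradient[OF assms(2)] by auto
  then show ?thesis
    unfolding hessL_def using DERIV_imp_deriv[OF has_real_derivative_gradient[OF assms(1)]]
    by (metis fun_upd_triv)
qed

definition feat_residual :: "nat \<Rightarrow> nat \<Rightarrow> (nat \<Rightarrow> nat \<Rightarrow> real) \<Rightarrow> (nat \<Rightarrow> real) \<Rightarrow> (nat \<Rightarrow> real) \<Rightarrow> nat \<Rightarrow> real" where
  "feat_residual n m x r \<theta> s = (\<Sum>t<2^m. residual n m x r \<theta> t * feat n m x t s)"

lemma sum_residual_model_deriv: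
  "(\<Sum>t<2^m. residual n m x r \<theta> t * model_deriv n m x \<theta> E t) =
   (\<Sum>s<2^m. feat_residual n m x r \<theta> s * weight_deriv m \<theta> E s)"
  unfolding model_deriv_def feat_residual_def sum_distrib_left sum_distrib_right
  by (subst sum.swap) (simp add: mult.assoc)

text \<open>Summing over the samples first is what brings the cost of the gradient down to \<open>O(M\<^sup>2)\<close>
  instead of \<open>O(m M\<^sup>2)\<close>.\<close>
lemma gradient_eq_feat_residual:
  "gradient n m x r \<theta> j = 1 / 2^m * (\<Sum>s<2^m. feat_residual n m x r \<theta> s * weight_deriv m \<theta> (bump (\<lambda>_. 0) j) s)"
  unfolding gradient_def sum_residual_model_deriv ..

lemma hessian_eq_feat_residual:
  "hessian n m x r \<theta> j k = 1 / 2^m *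
     ((\<Sum>t<2^m. model_deriv n m x \<theta> (bump (\<lambda>_. 0) j) t * model_deriv n m x \<theta> (bump (\<lambda>_. 0) k) t)
      + (\<Sum>s<2^m. feat_residual n m x r \<theta> s * weight_deriv m \<theta> (bump (bump (\<lambda>_. 0) k) j) s))"
  unfolding hessian_def sum.distrib sum_residual_model_deriv ..

locale same_samples =
  fixes n m :: nat and x x' :: "nat \<Rightarrow> nat \<Rightarrow> real" and r r' \<theta> \<theta>' :: "nat \<Rightarrow> real"
  assumes same_x: "\<And>t i. t < 2^m \<Longrightarrow> i < n \<Longrightarrow> x' t i = x t i"
    and same_r: "\<And>t. t < 2^m \<Longrightarrow> r' t = r t"
    and same_\<theta>: "\<And>j. j < m \<Longrightarrow> \<theta>' j = \<theta> j"
begin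

lemma same_dist2: "t < 2^m \<Longrightarrow> s < 2^m \<Longrightarrow> dist2 n x' t s = dist2 n x t s"
  unfolding dist2_def using same_x by simp

lemma same_sigma: "sigma n m x' = sigma n m x"
proof -
  have "{sqrt (dist2 n x' a b) | a b. a < 2^m \<and> b < 2^m} = {sqrt (dist2 n x a b) | a b. a < 2^m \<and> b < 2^m}"
    using same_dist2 by force
  then show ?thesis unfolding sigma_def by simp
qed

lemma same_feat: "t < 2^m \<Longrightarrow> s < 2^m \<Longrightarrow> feat n m x' t s = feat n m x t s"
  unfolding feat_def using same_dist2 same_sigma by simp

lemma same_weight_deriv: "weight_deriv m \<theta>' E s = weight_deriv m \<theta> E s"
  unfolding weight_deriv_def using same_\<theta> by simp

lemma same_model_deriv: "t < 2^m \<Longrightarrow> model_deriv n m x' \<theta>' E t = model_deriv n m x \<theta> E t"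
  unfolding model_deriv_def using same_feat same_weight_deriv by simp

lemma same_residual: "t < 2^m \<Longrightarrow> residual n m x' r' \<theta>' t = residual n m x r \<theta> t"
  unfolding residual_def using same_model_deriv same_r by simp

lemma same_gradient: "gradient n m x' r' \<theta>' j = gradient n m x r \<theta> j"
  unfolding gradient_def using same_model_deriv same_residual by simp

lemma same_hessian: "hessian n m x' r' \<theta>' j k = hessian n m x r \<theta> j k"
  unfolding hessian_def using same_model_deriv same_residual by simp

end

section \<open>Branch-free Gaussian elimination\<close>

definition nonsingular :: "nat \<Rightarrow> (nat \<Rightarrow> nat \<Rightarrow> real) \<Rightarrow> bool" where
  "nonsingular K A \<longleftrightarrow> (\<forall>d. (\<forall>i<K. (\<Sum>l<K. A i l * d l) = 0) \<longrightarrow> (\<forall>l<K. d l = 0))"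

text \<open>Matrices are augmented: in a system of size \<open>K\<close>, column \<open>K\<close> holds the right-hand side.
  As \<open>x / 0 = 0\<close>, the quotient \<open>A i 0 / A i 0\<close> is \<open>1\<close> or \<open>0\<close> according as \<open>A i 0 \<noteq> 0\<close> or not;
  thus \<open>pivot_sel A\<close> is the indicator of the first row with a nonzero entry in column \<open>0\<close>,
  and the elimination below needs no branching.\<close>
definition pivot_sel :: "(nat \<Rightarrow> nat \<Rightarrow> real) \<Rightarrow> nat \<Rightarrow> real" where
  "pivot_sel A i = (\<Prod>l<i. 1 - A l 0 / A l 0) * (A i 0 / A i 0)"

definition pivot_row :: "nat \<Rightarrow> (nat \<Rightarrow> nat \<Rightarrow> real) \<Rightarrow> nat \<Rightarrow> real" where
  "pivot_row K A l = (\<Sum>i<K. pivot_sel A i * A i l)"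

text \<open>Row \<open>0\<close> takes the place of the pivot row, so that rows \<open>1, \<dots>, K - 1\<close> are the
  non-pivot rows.\<close>
definition drop_pivot :: "(nat \<Rightarrow> nat \<Rightarrow> real) \<Rightarrow> nat \<Rightarrow> nat \<Rightarrow> real" where
  "drop_pivot A i l = A i l + pivot_sel A i * (A 0 l - A i l)"

definition eliminate :: "nat \<Rightarrow> (nat \<Rightarrow> nat \<Rightarrow> real) \<Rightarrow> nat \<Rightarrow> nat \<Rightarrow> real" where
  "eliminate K A i l = drop_pivot A i l - drop_pivot A i 0 / pivot_row K A 0 * pivot_row K A l"

fun solve :: "nat \<Rightarrow> (nat \<Rightarrow> nat \<Rightarrow> real) \<Rightarrow> nat \<Rightarrow> real" where
  "solve 0 A = (\<lambda>_. 0)"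
| "solve (Suc k) A =
     (let y = solve k (\<lambda>i l. eliminate (Suc k) A (Suc i) (Suc l))
      in (\<lambda>l. if l = 0
              then (pivot_row (Suc k) A (Suc k) - (\<Sum>l<k. pivot_row (Suc k) A (Suc l) * y l)) / pivot_row (Suc k) A 0
              else y (l - 1)))"

lemma pivot_sel_first_nonzero:
  assumes "A p 0 \<noteq> 0" "\<And>i. i < p \<Longrightarrow> A i 0 = 0"
  shows "pivot_sel A i = (if i = p then 1 else 0)"
proof (cases "p < i")
  case True
  then have "(\<Prod>l<i. 1 - A l 0 / A l 0) = 0"
    using assms(1) by (intro prod_zero) (auto intro!: bexI[of _ p])
  then show ?thesis unfolding pivot_sel_def using True by simp
next
  case False
  then show ?thesis unfolding pivot_sel_def using assms by (auto intro!: prod.neutral)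
qed

lemma sum_lessThan_Suc_split:
  "(\<Sum>l<Suc k. f l * x l) = f 0 * x 0 + (\<Sum>l<k. f (Suc l) * x (Suc l))" for f x :: "nat \<Rightarrow> real"
  by (rule sum.lessThan_Suc_shift)

lemma nonsingular_column_nonzero:
  assumes "nonsingular (Suc k) A"
  shows "\<exists>p<Suc k. A p 0 \<noteq> 0"
proof (rule ccontr)
  assume column_zero: "\<not> ?thesis"
  define d :: "nat \<Rightarrow> real" where "d l = (if l = 0 then 1 else 0)" for l
  have "(\<Sum>l<Suc k. A i l * d l) = 0" if "i < Suc k" for i
    using column_zero that unfolding sum_lessThan_Suc_split d_def by simp
  then have "d 0 = 0" using assms unfolding nonsingular_def by blast
  then show False unfolding d_def by simp
qed

locale elimination_step =
  fixes k :: nat and A :: "nat \<Rightarrow> nat \<Rightarrow> real"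
  assumes nonsingular: "nonsingular (Suc k) A"
begin

definition pivot :: nat where
  "pivot = (LEAST p. A p 0 \<noteq> 0)"

definition reduced :: "nat \<Rightarrow> nat \<Rightarrow> real" where
  "reduced i l = eliminate (Suc k) A (Suc i) (Suc l)"

lemma pivot_less: "pivot < Suc k" and pivot_nonzero: "A pivot 0 \<noteq> 0"
  and before_pivot: "i < pivot \<Longrightarrow> A i 0 = 0"
proof -
  obtain p where p: "p < Suc k" "A p 0 \<noteq> 0" using nonsingular_column_nonzero[OF nonsingular] by blast
  show "A pivot 0 \<noteq> 0" unfolding pivot_def by (rule LeastI, rule p(2))
  show "pivot < Suc k" unfolding pivot_def by (rule Least_le[THEN le_less_trans], rule p(2), rule p(1))
  show "i < pivot \<Longrightarrow> A i 0 = 0" unfolding pivot_def using not_less_Least by blast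
qed

lemma pivot_sel_eq: "pivot_sel A i = (if i = pivot then 1 else 0)"
  using pivot_sel_first_nonzero[of A pivot, OF pivot_nonzero before_pivot] .

lemma pivot_row_eq: "pivot_row (Suc k) A l = A pivot l"
proof -
  have "pivot_row (Suc k) A l = (\<Sum>i<Suc k. if i = pivot then A i l else 0)"
    unfolding pivot_row_def by (rule sum.cong) (simp_all add: pivot_sel_eq)
  then show ?thesis using pivot_less by simp
qed

text \<open>The eliminated row \<open>i\<close> stands for row \<open>\<sigma> i\<close> of \<open>A\<close>, where \<open>\<sigma>\<close> swaps \<open>0\<close> and the pivot.\<close>
lemma row_eq_eliminate:
  "A (if i = pivot then 0 else i) l = eliminate (Suc k) A i l + drop_pivot A i 0 / A pivot 0 * A pivot l"
  unfolding eliminate_def pivot_row_eq drop_pivot_def by (simp add: pivot_sel_eq)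

lemma eliminate_first_column: "eliminate (Suc k) A i 0 = 0"
  using row_eq_eliminate[of i 0] pivot_nonzero unfolding drop_pivot_def
  by (cases "i = pivot") (auto simp: pivot_sel_eq)

lemma sum_eliminate_Suc:
  "(\<Sum>l<Suc k. eliminate (Suc k) A (Suc i) l * x l) = (\<Sum>l<k. reduced i l * x (Suc l))"
  unfolding sum_lessThan_Suc_split reduced_def eliminate_first_column by simp

lemma rows_from_eliminated:
  assumes "j < Suc k" and pivot_eq: "(\<Sum>l<Suc k. A pivot l * x l) = b pivot"
    and eliminated_eq: "\<And>i. 1 \<le> i \<Longrightarrow> i < Suc k \<Longrightarrow>
      (\<Sum>l<Suc k. eliminate (Suc k) A i l * x l) = b (if i = pivot then 0 else i) - drop_pivot A i 0 / A pivot 0 * b pivot"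
  shows "(\<Sum>l<Suc k. A j l * x l) = b j"
proof -
  let ?\<sigma> = "\<lambda>i. if i = pivot then 0 else i"
  have "(\<Sum>l<Suc k. A (?\<sigma> i) l * x l) = b (?\<sigma> i)" if "1 \<le> i" "i < Suc k" for i
  proof -
    have "(\<Sum>l<Suc k. A (?\<sigma> i) l * x l) =
        (\<Sum>l<Suc k. eliminate (Suc k) A i l * x l) + drop_pivot A i 0 / A pivot 0 * (\<Sum>l<Suc k. A pivot l * x l)"
      unfolding row_eq_eliminate by (simp add: algebra_simps sum.distrib sum_distrib_left)
    then show ?thesis unfolding pivot_eq eliminated_eq[OF that] by simp
  qed
  moreover have "\<exists>i. 1 \<le> i \<and> i < Suc k \<and> j = ?\<sigma> i" if "j \<noteq> pivot"
  proof (cases "j = 0")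
    case True
    then show ?thesis using that pivot_less by (intro exI[of _ pivot]) simp
  next
    case False
    then show ?thesis using that \<open>j < Suc k\<close> by (intro exI[of _ j]) simp
  qed
  ultimately show ?thesis using pivot_eq by blast
qed

lemma nonsingular_reduced: "nonsingular k reduced"
  unfolding nonsingular_def
proof (intro allI impI)
  fix y l assume y: "\<forall>i<k. (\<Sum>l<k. reduced i l * y l) = 0" and "l < k"
  define x where "x l = (if l = 0 then - (\<Sum>l<k. A pivot (Suc l) * y l) / A pivot 0 else y (l - 1))" for l
  have "(\<Sum>l<Suc k. A j l * x l) = 0" if "j < Suc k" for j
  proof (rule rows_from_eliminated[where b = "\<lambda>_. 0", OF that])
    show "(\<Sum>l<Suc k. A pivot l * x l) = 0"
      unfolding sum_lessThan_Suc_split x_def using pivot_nonzero by simp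
    fix i assume "1 \<le> i" "i < Suc k"
    then obtain i' where i': "i = Suc i'" "i' < k" by (cases i) auto
    show "(\<Sum>l<Suc k. eliminate (Suc k) A i l * x l) = 0 - drop_pivot A i 0 / A pivot 0 * 0"
      unfolding i'(1) sum_eliminate_Suc x_def using y i'(2) by simp
  qed
  then have "x (Suc l) = 0" using nonsingular \<open>l < k\<close> unfolding nonsingular_def by blast
  then show "y l = 0" unfolding x_def by simp
qed

lemma solve_Suc_eq:
  "solve (Suc k) A l =
     (if l = 0 then (A pivot (Suc k) - (\<Sum>l<k. A pivot (Suc l) * solve k reduced l)) / A pivot 0
      else solve k reduced (l - 1))"
  unfolding solve.simps Let_def pivot_row_eq reduced_def ..

end

theorem solve_correct:
  assumes "nonsingular K A" "j < K"
  shows "(\<Sum>l<K. A j l * solve K A l) = A j K"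
  using assms
proof (induction K arbitrary: A j)
  case (Suc k)
  interpret elimination_step k A by unfold_locales (fact Suc.prems(1))
  have reduced_solved: "(\<Sum>l<k. reduced i l * solve k reduced l) = reduced i k" if "i < k" for i
    by (rule Suc.IH[OF nonsingular_reduced that])
  show ?case
  proof (rule rows_from_eliminated[where b = "\<lambda>j. A j (Suc k)", OF Suc.prems(2)])
    show "(\<Sum>l<Suc k. A pivot l * solve (Suc k) A l) = A pivot (Suc k)"
      unfolding sum_lessThan_Suc_split solve_Suc_eq using pivot_nonzero by simp
    fix i assume "1 \<le> i" "i < Suc k"
    then obtain i' where i': "i = Suc i'" "i' < k" by (cases i) auto
    have "(\<Sum>l<Suc k. eliminate (Suc k) A i l * solve (Suc k) A l) = reduced i' k"
      unfolding i' sum_eliminate_Suc solve_Suc_eq using reduced_solved[OF i'(2)] by simp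
    then show "(\<Sum>l<Suc k. eliminate (Suc k) A i l * solve (Suc k) A l) =
        A (if i = pivot then 0 else i) (Suc k) - drop_pivot A i 0 / A pivot 0 * A pivot (Suc k)"
      unfolding reduced_def i' row_eq_eliminate by simp
  qed
qed simp

lemma extends_solve:
  fixes A :: "nat \<Rightarrow> nat \<Rightarrow> quantity"
  assumes "\<And>i l. i < K \<Longrightarrow> l \<le> K \<Longrightarrow> A i l \<in> S"
  shows "extends (31 * K^3) S ((\<lambda>l inp. solve K (\<lambda>i l. A i l inp) l) ` {..<K})"
  using assms
proof (induction K arbitrary: A S)
  case 0
  then show ?case by (simp add: extends_subset)
next
  case (Suc k)
  let ?K = "Suc k"
  define sel where "sel i inp = pivot_sel (\<lambda>i l. A i l inp) i" for i inp
  define prow where "prow l inp = pivot_row ?K (\<lambda>i l. A i l inp) l" for l inp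
  define elim where "elim i l inp = eliminate ?K (\<lambda>i l. A i l inp) i l" for i l inp
  define y where "y l inp = solve k (\<lambda>i l. elim (Suc i) (Suc l) inp) l" for l inp
  define x0 where "x0 inp = (prow ?K inp - (\<Sum>l<k. prow (Suc l) inp * y l inp)) / prow 0 inp" for inp
  define Sel where "Sel = sel ` {..<?K}"
  define Prow where "Prow = prow ` {..?K}"
  define Elim where "Elim = (\<lambda>(i, l). elim i l) ` ({..<?K} \<times> {..?K})"
  define Y where "Y = y ` {..<k}"
  have AS: "A i l \<in> S" if "i < ?K" "l \<le> ?K" for i l using Suc.prems that .
  have Y_cost: "extends (31 * k^3) (S \<union> Sel \<union> Prow \<union> Elim) Y"
    unfolding Y_def y_def by (rule Suc.IH) (auto simp: Elim_def)
  have "extends (?K * (4 * ?K)) S (S \<union> Sel)"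
    unfolding Sel_def
    by (rule extends_keep_image[where V = S
          and e = "\<lambda>i. Times (eprod i (\<lambda>l. Minus (Lit 1) (Quot (Var (A l 0)) (Var (A l 0))))) (Quot (Var (A i 0)) (Var (A i 0)))"])
      (auto intro: AS simp: sel_def pivot_sel_def)
  also have "extends ((?K + 1) * (2 * ?K + 1)) \<dots> (\<dots> \<union> Prow)"
    unfolding Prow_def
    by (rule extends_keep_image[where V = "S \<union> Sel" and e = "\<lambda>l. esum ?K (\<lambda>i. Times (Var (sel i)) (Var (A i l)))"])
      (auto intro: AS simp: Sel_def prow_def sel_def pivot_row_def)
  also have "extends ((?K * (?K + 1)) * 9) \<dots> (\<dots> \<union> Elim)"
  proof -
    let ?D = "\<lambda>i l. Plus (Var (A i l)) (Times (Var (sel i)) (Minus (Var (A 0 l)) (Var (A i l))))"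
    show ?thesis
      unfolding Elim_def
      by (rule extends_keep_image[where V = "S \<union> Sel \<union> Prow" and e = "\<lambda>(i, l). Minus (?D i l) (Times (Quot (?D i 0) (Var (prow 0))) (Var (prow l)))"])
        (auto intro: AS simp: card_cartesian_product Sel_def Prow_def elim_def eliminate_def drop_pivot_def sel_def prow_def)
  qed
  also have "extends (31 * k^3) \<dots> (\<dots> \<union> Y)"
    by (rule extends_keep[OF Y_cost]) auto
  also have "extends (2 * ?K + 1) \<dots> (\<dots> \<union> {x0})"
    by (rule extends_keep_eval[where V = "Prow \<union> Y" and e = "Quot (Minus (Var (prow ?K)) (esum k (\<lambda>l. Times (Var (prow (Suc l))) (Var (y l))))) (Var (prow 0))"])
      (auto simp: x0_def Prow_def Y_def)
  finally show ?case
  proof (rule extends_mono)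
    have "(\<lambda>inp. solve ?K (\<lambda>i l. A i l inp) l) = (if l = 0 then x0 else y (l - 1))" for l
      by (auto simp: x0_def y_def prow_def elim_def Let_def)
    then show "(\<lambda>l inp. solve ?K (\<lambda>i l. A i l inp) l) ` {..<?K} \<subseteq> S \<union> Sel \<union> Prow \<union> Elim \<union> Y \<union> {x0}"
      unfolding Y_def by auto
    show "?K * (4 * ?K) + (?K + 1) * (2 * ?K + 1) + ?K * (?K + 1) * 9 + 31 * k^3 + (2 * ?K + 1) \<le> 31 * ?K^3"
      by (simp add: algebra_simps power3_eq_cube)
  qed simp
qed

section \<open>Cost of one optimisation step\<close>

lemma image_pairs_div_mod:
  assumes "(M::nat) > 0"
  shows "{f a b | a b. a < M \<and> b < M} = (\<lambda>p. f (p div M) (p mod M)) ` {..M * M - 1}"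
proof -
  have "{..M * M - 1} = {..<M * M}"
    using assms by (metis Suc_pred' lessThan_Suc_atMost nat_0_less_mult_iff)
  moreover have "{f a b | a b. a < M \<and> b < M} = (\<lambda>p. f (p div M) (p mod M)) ` {..<M * M}"
  proof (intro set_eqI iffI)
    fix z assume "z \<in> {f a b | a b. a < M \<and> b < M}"
    then obtain a b where z: "z = f a b" "a < M" "b < M" by blast
    have "a * M + b < Suc a * M" using z(3) by simp
    also have "\<dots> \<le> M * M" using z(2) by (intro mult_right_mono) auto
    finally have "a * M + b < M * M" .
    then show "z \<in> (\<lambda>p. f (p div M) (p mod M)) ` {..<M * M}"
      using z by (intro image_eqI[where x = "a * M + b"]) auto
  next
    fix z assume "z \<in> (\<lambda>p. f (p div M) (p mod M)) ` {..<M * M}"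
    then obtain p where "z = f (p div M) (p mod M)" "p < M * M" by blast
    moreover have "p div M < M" using \<open>p < M * M\<close> by (simp add: less_mult_imp_div_less)
    ultimately show "z \<in> {f a b | a b. a < M \<and> b < M}"
      using assms by (intro CollectI exI[of _ "p div M"] exI[of _ "p mod M"]) simp
  qed
  ultimately show ?thesis by simp
qed

lemma square_le_two_pow: "m * m \<le> 2 * 2 ^ m"
proof (induction m)
  case (Suc m)
  have "2 * m + 1 \<le> 2 ^ Suc m"
  proof (cases m)
    case (Suc k)
    have "k < 2 ^ k" "(2::nat) ^ Suc m = 4 * 2 ^ k" using Suc by (simp_all add: less_exp)
    then show ?thesis using Suc by linarith
  qed simp
  then show ?case using Suc.IH by simp
qed simp

lemma gradient_cost_le:
  fixes n m M :: nat
  assumes "1 \<le> n" "1 \<le> M" "m \<le> M" "m * m \<le> 2 * M"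
  shows "(M * M) * (8 * n + 1) + (4 * (M * M) + 9) + (M * M) * 4 + (3 * m * M) * 4 + ((m + 1) * M) * (m + 1)
      + M * (2 * M + 3) + M * (2 * M + 1) + m * (2 * M + 3) + m * 5 \<le> 64 * (n * M * M)"
proof -
  define U where "U = n * M * M"
  have U1: "M * M \<le> U" unfolding U_def using mult_le_mono1[OF assms(1), of "M * M"] by (simp add: mult.assoc)
  have U2: "M \<le> U" using order.trans[OF mult_le_mono2[OF assms(2), of M] U1] by simp
  have U3: "m * M \<le> U" using order.trans[OF mult_le_mono1[OF assms(3)] U1] .
  have "m * m * M \<le> 2 * (M * M)" using mult_le_mono1[OF assms(4), of M] by (simp only: mult.assoc)
  then have U4: "m * m * M \<le> 2 * U" using U1 by linarith
  have "(M * M) * (8 * n + 1) + (4 * (M * M) + 9) + (M * M) * 4 + (3 * m * M) * 4 + ((m + 1) * M) * (m + 1)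
      + M * (2 * M + 3) + M * (2 * M + 1) + m * (2 * M + 3) + m * 5
      = 8 * U + 13 * (M * M) + 9 + 16 * (m * M) + m * m * M + 5 * M + 8 * m"
    unfolding U_def by (simp add: algebra_simps)
  also have "\<dots> \<le> 64 * U" using U1 U2 U3 U4 assms(2,3) by linarith
  finally show ?thesis unfolding U_def .
qed

lemma newton_cost_le:
  fixes n m M :: nat
  assumes "m \<le> M" "1 \<le> M"
  shows "64 * (n * M * M) + m * M * (2 * M + 1) + m * m * M * (m + 1) + m * m * (4 * M + 5) + 31 * m ^ 3 + m * 2
      \<le> 64 * (M * M * (n + m * m))"
proof -
  define V where "V = m * m * (M * M)"
  have mm: "m \<le> m * m" by (cases m) auto
  have MM: "M \<le> M * M" using assms(2) by simp
  have V1: "m * M \<le> V" unfolding V_def by (rule mult_le_mono[OF mm MM])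
  have V2: "m * (M * M) \<le> V" unfolding V_def by (rule mult_le_mono1[OF mm])
  have V3: "m * m * M \<le> V" unfolding V_def by (rule mult_le_mono2[OF MM])
  have V4: "m * m \<le> V" unfolding V_def using mult_le_mono2[of 1 "M * M" "m * m"] assms(2) by simp
  have V5: "m * m * (m * M) \<le> V" unfolding V_def by (rule mult_le_mono2[OF mult_le_mono1[OF assms(1)]])
  have V6: "m * m * m \<le> V"
    using order.trans[OF mult_le_mono2[OF mult_le_mono2[OF assms(2), of m], of "m * m"] V5] by simp
  have "m * M * (2 * M + 1) + m * m * M * (m + 1) + m * m * (4 * M + 5) + 31 * m ^ 3 + m * 2
      = 2 * (m * (M * M)) + m * M + m * m * (m * M) + 5 * (m * m * M) + 5 * (m * m) + 31 * (m * m * m) + 2 * m"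
    by (simp add: algebra_simps power3_eq_cube)
  also have "\<dots> \<le> 64 * V" using V1 V2 V3 V4 V5 V6 mm by linarith
  finally show ?thesis unfolding V_def by (simp add: algebra_simps)
qed

locale input_layout =
  fixes n m :: nat
begin

abbreviation M :: nat where "M \<equiv> 2 ^ m"

definition sample :: "(nat \<Rightarrow> real) \<Rightarrow> nat \<Rightarrow> nat \<Rightarrow> real" where
  "sample inp t i = inp (t * n + i)"

definition label :: "(nat \<Rightarrow> real) \<Rightarrow> nat \<Rightarrow> real" where
  "label inp t = inp (M * n + t)"

definition param :: "(nat \<Rightarrow> real) \<Rightarrow> nat \<Rightarrow> real" where
  "param inp j = inp (M * n + M + j)"

definition rate :: "(nat \<Rightarrow> real) \<Rightarrow> real" where
  "rate inp = inp (M * n + M + m)"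

lemma sample_enc:
  assumes "t < M" "i < n"
  shows "sample (enc n m x r \<theta> \<eta>) t i = x t i"
proof -
  have "t * n + i < Suc t * n" using assms(2) by simp
  also have "\<dots> \<le> M * n" using assms(1) by (intro mult_right_mono) auto
  finally show ?thesis unfolding sample_def enc_def Let_def using assms(2) by (simp add: mult.commute)
qed

lemma label_enc: "t < M \<Longrightarrow> label (enc n m x r \<theta> \<eta>) t = r t"
  unfolding label_def enc_def Let_def by simp

lemma param_enc: "j < m \<Longrightarrow> param (enc n m x r \<theta> \<eta>) j = \<theta> j"
  unfolding param_def enc_def Let_def by simp

lemma rate_enc: "rate (enc n m x r \<theta> \<eta>) = \<eta>"
  unfolding rate_def enc_def Let_def by simp

lemma same_samples_enc:
  "same_samples n m x (sample (enc n m x r \<theta> \<eta>)) r (label (enc n m x r \<theta> \<eta>)) \<theta> (param (enc n m x r \<theta> \<eta>))"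
  by unfold_locales (simp_all add: sample_enc label_enc param_enc)

definition dist :: "nat \<Rightarrow> nat \<Rightarrow> quantity" where
  "dist t s inp = dist2 n (sample inp) t s"

definition bandwidth :: quantity where
  "bandwidth inp = 2 * (sigma n m (sample inp))^2"

definition feature :: "nat \<Rightarrow> nat \<Rightarrow> quantity" where
  "feature t s inp = feat n m (sample inp) t s"

definition factor :: "nat \<Rightarrow> nat \<Rightarrow> nat \<Rightarrow> quantity" where
  "factor e j s inp = cos (param inp j - phase j s + real e * pi / 2)"

definition weight :: "(nat \<Rightarrow> nat) \<Rightarrow> nat \<Rightarrow> quantity" where
  "weight E s inp = weight_deriv m (param inp) E s"

definition resid :: "nat \<Rightarrow> quantity" where
  "resid t inp = residual n m (sample inp) (label inp) (param inp) t"

definition feat_resid :: "nat \<Rightarrow> quantity" where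
  "feat_resid s inp = feat_residual n m (sample inp) (label inp) (param inp) s"

definition grad :: "nat \<Rightarrow> quantity" where
  "grad j inp = gradient n m (sample inp) (label inp) (param inp) j"

definition gd_step :: "nat \<Rightarrow> quantity" where
  "gd_step j inp = param inp j - rate inp * grad j inp"

definition dists :: "quantity set" where
  "dists = case_prod dist ` ({..<M} \<times> {..<M})"
definition features :: "quantity set" where
  "features = case_prod feature ` ({..<M} \<times> {..<M})"
definition factors :: "quantity set" where
  "factors = (\<lambda>(e, j, s). factor e j s) ` ({..<3} \<times> {..<m} \<times> {..<M})"
definition weights :: "(nat \<Rightarrow> nat) set \<Rightarrow> quantity set" where
  "weights Es = case_prod weight ` (Es \<times> {..<M})"
definition first_order :: "(nat \<Rightarrow> nat) set" where
  "first_order = insert (\<lambda>_. 0) ((\<lambda>j. bump (\<lambda>_. 0) j) ` {..<m})"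

lemma dist_mem: "t < M \<Longrightarrow> s < M \<Longrightarrow> dist t s \<in> dists"
  unfolding dists_def by (auto intro: image_eqI[where x = "(t, s)"])

lemma feature_mem: "t < M \<Longrightarrow> s < M \<Longrightarrow> feature t s \<in> features"
  unfolding features_def by (auto intro: image_eqI[where x = "(t, s)"])

lemma factor_mem: "e < 3 \<Longrightarrow> j < m \<Longrightarrow> s < M \<Longrightarrow> factor e j s \<in> factors"
  unfolding factors_def by (auto intro: image_eqI[where x = "(e, j, s)"])

lemma weight_mem: "E \<in> Es \<Longrightarrow> s < M \<Longrightarrow> weight E s \<in> weights Es"
  unfolding weights_def by (auto intro: image_eqI[where x = "(E, s)"])

lemma card_first_order: "card first_order \<le> m + 1"
proof -
  have "card ((\<lambda>j. bump (\<lambda>_. 0) j) ` {..<m}) \<le> m" using card_image_le[of "{..<m}"] by simp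
  then show ?thesis unfolding first_order_def by (simp add: card_insert_if)
qed

lemma first_order_lt_3: "E \<in> first_order \<Longrightarrow> E j < 3"
  unfolding first_order_def bump_def by auto

lemma finite_first_order: "finite first_order"
  unfolding first_order_def by simp

lemma extends_weights:
  assumes "finite Es" "card Es \<le> N" "\<And>E j. E \<in> Es \<Longrightarrow> E j < 3" "factors \<subseteq> U"
  shows "extends ((N * M) * (m + 1)) U (U \<union> weights Es)"
  unfolding weights_def
proof (rule extends_keep_image[where V = factors and e = "\<lambda>(E, s). eprod m (\<lambda>j. Var (factor (E j) j s))"])
  show "card (Es \<times> {..<M}) \<le> N * M"
    unfolding card_cartesian_product card_lessThan by (rule mult_right_mono[OF assms(2)]) simp
qed (auto simp: weight_def factor_def weight_deriv_def assms intro!: factor_mem)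

lemma extends_bandwidth:
  assumes "dists \<subseteq> U"
  shows "extends (4 * (M * M) + 9) U (U \<union> {bandwidth})"
proof -
  have M_pos: "0 < M" by simp
  let ?\<sigma> = "Quot (emax (M * M - 1) (\<lambda>p. SquareRoot (Var (dist (p div M) (p mod M))))) (Lit (sqrt (2 * 2^m)))"
  have "sigma n m (sample inp) = eval ?\<sigma> inp" for inp
    unfolding sigma_def image_pairs_div_mod[OF M_pos] by (simp add: dist_def image_image)
  moreover have "dist (p div M) (p mod M) \<in> dists" if "p \<le> M * M - 1" for p
  proof -
    have "p < M * M" using that M_pos by (simp add: le_diff_conv2 Suc_le_eq)
    then show ?thesis by (simp add: dist_mem less_mult_imp_div_less)
  qed
  ultimately show ?thesis
    by (intro extends_keep_eval[where V = dists and e = "Times (Lit 2) (Times ?\<sigma> ?\<sigma>)"])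
      (auto simp: bandwidth_def power2_eq_square assms)
qed

definition gradient_values :: "quantity set" where
  "gradient_values = dists \<union> {bandwidth} \<union> features \<union> factors \<union> weights first_order
     \<union> resid ` {..<M} \<union> feat_resid ` {..<M} \<union> grad ` {..<m} \<union> gd_step ` {..<m}"

lemma extends_gradient_values:
  assumes "n \<ge> 1"
  shows "extends (64 * (n * M * M)) {} gradient_values"
proof -
  let ?d = "\<lambda>i t s. Minus (Input (t * n + i)) (Input (s * n + i))"
  have "extends ((M * M) * (8 * n + 1)) {} ({} \<union> dists)"
    unfolding dists_def
    by (rule extends_keep_image[where V = "{}" and e = "\<lambda>(t, s). esum n (\<lambda>i. Times (?d i t s) (?d i t s))"])
      (auto simp: card_cartesian_product dist_def dist2_def sample_def power2_eq_square)
  also have "extends (4 * (M * M) + 9) \<dots> (\<dots> \<union> {bandwidth})"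
    by (rule extends_bandwidth) auto
  also have "extends ((M * M) * 4) \<dots> (\<dots> \<union> features)"
    unfolding features_def
    by (rule extends_keep_image[where V = "dists \<union> {bandwidth}"
          and e = "\<lambda>(t, s). Exponential (Quot (Minus (Lit 0) (Var (dist t s))) (Var bandwidth))"])
      (auto simp: card_cartesian_product feature_def feat_def dist_def bandwidth_def dists_def)
  also have "extends ((3 * m * M) * 4) \<dots> (\<dots> \<union> factors)"
    unfolding factors_def
    by (rule extends_keep_image[where V = "{}"
          and e = "\<lambda>(e, j, s). Cosine (Plus (Input (M * n + M + j)) (Lit (real e * pi / 2 - phase j s)))"])
      (auto simp: card_cartesian_product factor_def param_def algebra_simps)
  also have "extends (((m + 1) * M) * (m + 1)) \<dots> (\<dots> \<union> weights first_order)"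
    by (rule extends_weights[OF finite_first_order card_first_order]) (auto simp: first_order_lt_3)
  also have "extends (M * (2 * M + 3)) \<dots> (\<dots> \<union> resid ` {..<M})"
    by (rule extends_keep_image[where V = "features \<union> weights first_order"
          and e = "\<lambda>t. Minus (esum M (\<lambda>s. Times (Var (feature t s)) (Var (weight (\<lambda>_. 0) s)))) (Input (M * n + t))"])
      (auto simp: resid_def residual_def model_deriv_def feature_def weight_def label_def first_order_def
        intro!: feature_mem weight_mem)
  also have "extends (M * (2 * M + 1)) \<dots> (\<dots> \<union> feat_resid ` {..<M})"
    by (rule extends_keep_image[where V = "resid ` {..<M} \<union> features"
          and e = "\<lambda>s. esum M (\<lambda>t. Times (Var (resid t)) (Var (feature t s)))"])
      (auto simp: feat_resid_def feat_residual_def resid_def feature_def intro!: feature_mem)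
  also have "extends (m * (2 * M + 3)) \<dots> (\<dots> \<union> grad ` {..<m})"
    by (rule extends_keep_image[where V = "feat_resid ` {..<M} \<union> weights first_order"
          and e = "\<lambda>j. Times (Lit (1 / 2^m)) (esum M (\<lambda>s. Times (Var (feat_resid s)) (Var (weight (bump (\<lambda>_. 0) j) s))))"])
      (auto simp: grad_def gradient_eq_feat_residual feat_resid_def weight_def first_order_def intro!: weight_mem)
  also have "extends (m * 5) \<dots> (\<dots> \<union> gd_step ` {..<m})"
    by (rule extends_keep_image[where V = "grad ` {..<m}"
          and e = "\<lambda>j. Minus (Input (M * n + M + j)) (Times (Input (M * n + M + m)) (Var (grad j)))"])
      (auto simp: gd_step_def param_def rate_def)
  finally show ?thesis
    unfolding gradient_values_def
  proof (rule extends_mono)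
    show "(M * M) * (8 * n + 1) + (4 * (M * M) + 9) + (M * M) * 4 + (3 * m * M) * 4 + ((m + 1) * M) * (m + 1)
        + M * (2 * M + 3) + M * (2 * M + 1) + m * (2 * M + 3) + m * 5 \<le> 64 * (n * M * M)"
      using assms less_exp[of m] square_le_two_pow[of m] by (intro gradient_cost_le) simp_all
  qed auto
qed

definition model_partial :: "nat \<Rightarrow> nat \<Rightarrow> quantity" where
  "model_partial j t inp = model_deriv n m (sample inp) (param inp) (bump (\<lambda>_. 0) j) t"

definition hess :: "nat \<Rightarrow> nat \<Rightarrow> quantity" where
  "hess j k inp = hessian n m (sample inp) (label inp) (param inp) j k"

definition newton_system :: "nat \<Rightarrow> nat \<Rightarrow> quantity" where
  "newton_system i l inp = (if l < m then hess i l inp else grad i inp)"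

definition newton_step :: "nat \<Rightarrow> quantity" where
  "newton_step j inp = param inp j - solve m (\<lambda>i l. newton_system i l inp) j"

definition second_order :: "(nat \<Rightarrow> nat) set" where
  "second_order = (\<lambda>(j, k). bump (bump (\<lambda>_. 0) k) j) ` ({..<m} \<times> {..<m})"

lemma second_order_lt_3: "E \<in> second_order \<Longrightarrow> E j < 3"
  unfolding second_order_def bump_def by auto

lemma finite_second_order: "finite second_order"
  unfolding second_order_def by simp

lemma card_second_order: "card second_order \<le> m * m"
  unfolding second_order_def using card_image_le[of "{..<m} \<times> {..<m}"] by (simp add: card_cartesian_product)

lemma extends_newton_steps:
  assumes "n \<ge> 1"
  shows "extends (64 * (M * M * (n + m * m))) {} (newton_step ` {..<m})"
proof -
  have "extends (64 * (n * M * M)) {} gradient_values" by (rule extends_gradient_values[OF assms])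
  also have "extends ((m * M) * (2 * M + 1)) \<dots> (\<dots> \<union> case_prod model_partial ` ({..<m} \<times> {..<M}))"
    by (rule extends_keep_image[where V = "features \<union> weights first_order"
          and e = "\<lambda>(j, t). esum M (\<lambda>s. Times (Var (feature t s)) (Var (weight (bump (\<lambda>_. 0) j) s)))"])
      (auto simp: card_cartesian_product gradient_values_def model_partial_def model_deriv_def feature_def
        weight_def first_order_def intro!: feature_mem weight_mem)
  also have "extends ((m * m * M) * (m + 1)) \<dots> (\<dots> \<union> weights second_order)"
    by (rule extends_weights[OF finite_second_order card_second_order])
      (auto simp: second_order_lt_3 gradient_values_def)
  also have "extends ((m * m) * (4 * M + 5)) \<dots> (\<dots> \<union> case_prod hess ` ({..<m} \<times> {..<m}))"
  proof -
    let ?e = "\<lambda>(j, k). Times (Lit (1 / 2^m))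
      (Plus (esum M (\<lambda>t. Times (Var (model_partial j t)) (Var (model_partial k t))))
            (esum M (\<lambda>s. Times (Var (feat_resid s)) (Var (weight (bump (bump (\<lambda>_. 0) k) j) s)))))"
    show ?thesis
      by (rule extends_keep_image[where V = "case_prod model_partial ` ({..<m} \<times> {..<M}) \<union> feat_resid ` {..<M} \<union> weights second_order"
            and e = ?e])
        (auto simp: card_cartesian_product gradient_values_def hess_def hessian_eq_feat_residual model_partial_def
          feat_resid_def weight_def second_order_def intro!: weight_mem)
  qed
  also have "extends (31 * m^3) \<dots> (\<dots> \<union> (\<lambda>l inp. solve m (\<lambda>i l. newton_system i l inp) l) ` {..<m})"
  proof (rule extends_keep[OF extends_solve])
    fix i l assume "i < m" "l \<le> m"
    then show "newton_system i l \<in> case_prod hess ` ({..<m} \<times> {..<m}) \<union> grad ` {..<m}"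
      by (cases "l < m") (auto simp: newton_system_def[abs_def])
  qed (auto simp: gradient_values_def)
  also have "extends (m * 2) \<dots> (\<dots> \<union> newton_step ` {..<m})"
    by (rule extends_keep_image[where V = "(\<lambda>l inp. solve m (\<lambda>i l. newton_system i l inp) l) ` {..<m}"
          and e = "\<lambda>j. Minus (Input (M * n + M + j)) (Var (\<lambda>inp. solve m (\<lambda>i l. newton_system i l inp) j))"])
      (auto simp: newton_step_def param_def)
  finally show ?thesis
  proof (rule extends_mono)
    show "64 * (n * M * M) + m * M * (2 * M + 1) + m * m * M * (m + 1) + m * m * (4 * M + 5) + 31 * m ^ 3 + m * 2
      \<le> 64 * (M * M * (n + m * m))"
      using less_exp[of m] by (intro newton_cost_le) simp_all
  qed auto
qed

lemma gd_step_enc: "j < m \<Longrightarrow> gd_step j (enc n m x r \<theta> \<eta>) = \<theta> j - \<eta> * gradL n m x r \<theta> j"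
  using same_samples.same_gradient[OF same_samples_enc]
  by (simp add: gd_step_def grad_def param_enc rate_enc gradL_eq_gradient)

lemma newton_step_enc:
  assumes "j < m"
  shows "newton_step j (enc n m x r \<theta> \<eta>) =
     \<theta> j - solve m (\<lambda>i l. if l < m then hessian n m x r \<theta> i l else gradient n m x r \<theta> i) j"
proof -
  have "(\<lambda>i l. newton_system i l (enc n m x r \<theta> \<eta>)) =
      (\<lambda>i l. if l < m then hessian n m x r \<theta> i l else gradient n m x r \<theta> i)"
    using same_samples.same_gradient[OF same_samples_enc] same_samples.same_hessian[OF same_samples_enc]
    by (intro ext) (simp add: newton_system_def hess_def grad_def)
  then show ?thesis using assms by (simp add: newton_step_def param_enc)
qed

lemma gradient_descent_program:
  assumes "n \<ge> 1"
  shows "\<exists>P outs. real (length P) \<le> 64 * real n * (2 ^ m)^2 \<and>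
    (\<forall>x r \<theta> \<eta>. run P outs (enc n m x r \<theta> \<eta>) = map (\<lambda>j. \<theta> j - \<eta> * gradL n m x r \<theta> j) [0..<m])"
proof -
  obtain P outs where P: "length P \<le> 64 * (n * M * M)" "\<forall>inp. run P outs inp = map (\<lambda>j. gd_step j inp) [0..<m]"
    using extends_program[OF extends_mono[OF extends_gradient_values[OF assms]]]
    unfolding gradient_values_def by blast
  have "real (length P) \<le> 64 * real n * (2 ^ m)^2"
    using of_nat_mono[OF P(1)] by (simp add: power2_eq_square algebra_simps)
  moreover have "run P outs (enc n m x r \<theta> \<eta>) = map (\<lambda>j. \<theta> j - \<eta> * gradL n m x r \<theta> j) [0..<m]" for x r \<theta> \<eta>
    unfolding P(2)[rule_format] by (intro map_cong refl) (simp add: gd_step_enc)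
  ultimately show ?thesis by blast
qed

lemma newton_program:
  assumes "n \<ge> 1"
  shows "\<exists>P outs. real (length P) \<le> 64 * (2 ^ m)^2 * (real n + (real m)^2) \<and> length outs = m \<and>
    (\<forall>x r \<theta> \<eta>. (\<forall>d. (\<forall>j<m. (\<Sum>k<m. hessL n m x r \<theta> j k * d k) = 0) \<longrightarrow> (\<forall>k<m. d k = 0)) \<longrightarrow>
       (\<forall>j<m. (\<Sum>k<m. hessL n m x r \<theta> j k * (\<theta> k - run P outs (enc n m x r \<theta> \<eta>) ! k)) = gradL n m x r \<theta> j))"
proof -
  obtain P outs where P: "length P \<le> 64 * (M * M * (n + m * m))" "length outs = m"
    "\<forall>inp. run P outs inp = map (\<lambda>j. newton_step j inp) [0..<m]"
    using extends_program[OF extends_newton_steps[OF assms]] by blast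
  have "(\<Sum>k<m. hessL n m x r \<theta> j k * (\<theta> k - run P outs (enc n m x r \<theta> \<eta>) ! k)) = gradL n m x r \<theta> j"
    if hess_inj: "\<forall>d. (\<forall>j<m. (\<Sum>k<m. hessL n m x r \<theta> j k * d k) = 0) \<longrightarrow> (\<forall>k<m. d k = 0)" and "j < m"
    for x r \<theta> \<eta> j
  proof -
    define A where "A i l = (if l < m then hessian n m x r \<theta> i l else gradient n m x r \<theta> i)" for i l
    have hess_A: "(\<Sum>k<m. hessL n m x r \<theta> i k * d k) = (\<Sum>k<m. A i k * d k)" if "i < m" for i d
      using that by (intro sum.cong) (simp_all add: A_def hessL_eq_hessian)
    have "nonsingular m A"
      using hess_inj unfolding nonsingular_def by (simp add: hess_A)
    have "(\<Sum>k<m. hessL n m x r \<theta> j k * (\<theta> k - run P outs (enc n m x r \<theta> \<eta>) ! k)) = (\<Sum>k<m. A j k * solve m A k)"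
      unfolding hess_A[OF \<open>j < m\<close>] P(3)[rule_format]
      by (intro sum.cong) (simp_all add: newton_step_enc A_def[abs_def])
    also have "\<dots> = A j m" by (rule solve_correct[OF \<open>nonsingular m A\<close> \<open>j < m\<close>])
    finally show ?thesis by (simp add: A_def gradL_eq_gradient \<open>j < m\<close>)
  qed
  moreover have "real (length P) \<le> 64 * (2 ^ m)^2 * (real n + (real m)^2)"
    using of_nat_mono[OF P(1)] by (simp add: power2_eq_square algebra_simps)
  ultimately show ?thesis using P(2) by blast
qed

end

theorem theorem1:
  shows
  "(\<exists>C>0. \<forall>n\<ge>1. \<forall>m\<ge>1. \<exists>P outs.
      real (length P) \<le> C * real n * (2 ^ m)^2 \<and>
      (\<forall>x r \<theta> \<eta>. (\<forall>t<2^m. r t = 1 \<or> r t = -1) \<longrightarrow>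
         run P outs (enc n m x r \<theta> \<eta>) = map (\<lambda>j. \<theta> j - \<eta> * gradL n m x r \<theta> j) [0..<m]))
   \<and>
   (\<exists>C>0. \<forall>n\<ge>1. \<forall>m\<ge>1. \<exists>P outs.
      real (length P) \<le> C * (2 ^ m)^2 * (real n + (real m)^2) \<and>
      length outs = m \<and>
      (\<forall>x r \<theta> \<eta>. (\<forall>t<2^m. r t = 1 \<or> r t = -1) \<longrightarrow>
         (\<forall>d. (\<forall>j<m. (\<Sum>k<m. hessL n m x r \<theta> j k * d k) = 0) \<longrightarrow> (\<forall>k<m. d k = 0)) \<longrightarrow>
         (\<forall>j<m. (\<Sum>k<m. hessL n m x r \<theta> j k * (\<theta> k - run P outs (enc n m x r \<theta> \<eta>) ! k))
                 = gradL n m x r \<theta> j)))"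
proof (intro conjI exI[of _ 64] allI impI; (simp only: zero_less_numeral)?)
  fix n m :: nat assume "1 \<le> n"
  then show "\<exists>P outs. real (length P) \<le> 64 * real n * (2 ^ m)^2 \<and>
      (\<forall>x r \<theta> \<eta>. (\<forall>t<2^m. r t = 1 \<or> r t = -1) \<longrightarrow>
         run P outs (enc n m x r \<theta> \<eta>) = map (\<lambda>j. \<theta> j - \<eta> * gradL n m x r \<theta> j) [0..<m])"
    using input_layout.gradient_descent_program[OF \<open>1 \<le> n\<close>, where m = m] by blast
next
  fix n m :: nat assume "1 \<le> n"
  then show "\<exists>P outs. real (length P) \<le> 64 * (2 ^ m)^2 * (real n + (real m)^2) \<and> length outs = m \<and>
      (\<forall>x r \<theta> \<eta>. (\<forall>t<2^m. r t = 1 \<or> r t = -1) \<longrightarrow>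
         (\<forall>d. (\<forall>j<m. (\<Sum>k<m. hessL n m x r \<theta> j k * d k) = 0) \<longrightarrow> (\<forall>k<m. d k = 0)) \<longrightarrow>
         (\<forall>j<m. (\<Sum>k<m. hessL n m x r \<theta> j k * (\<theta> k - run P outs (enc n m x r \<theta> \<eta>) ! k))
                 = gradL n m x r \<theta> j))"
    using input_layout.newton_program[OF \<open>1 \<le> n\<close>, where m = m] by blast
qed

end
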